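(* For all $0<x<\pi/2$, \[ \frac{\frac{2\pi^4}{3}x^3+\left(\frac{8\pi^4}{15}-\frac{16\pi^2}{3}\right)x^5}{(\pi^2-4x^2)^2}<x\sec^2x-\tan x<\frac{\frac{2\pi^4}{3}x^3+\left(\frac{256}{\pi^2}-\frac{8\pi^2}{3}\right)x^5}{(\pi^2-4x^2)^2}, \] and the constants $\frac{8\pi^4}{15}-\frac{16\pi^2}{3}$ and $\frac{256}{\pi^2}-\frac{8\pi^2}{3}$ are the best possible. *)

theory Defs
  imports Complex_Main
begin

definition f20 :: "real \<Rightarrow> real" where
  "f20 x = x / (cos x)\<^sup>2 - tan x"

definition bound20 :: "real \<Rightarrow> real \<Rightarrow> real" where
  "bound20 c x = (2 * pi^4 / 3 * x^3 + c * x^5) / (pi\<^sup>2 - 4 * x\<^sup>2)\<^sup>2"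

end

theory Submission
  imports Defs "HOL-Analysis.Gamma_Function" "HOL-Real_Asymp.Real_Asymp"
begin

(* Put u = 4 x^2 / pi^2.  The reflection formulas for the digamma and trigamma functions give
   the partial fraction expansion

     x sec^2 x - tan x = 64 x^3 / pi^4 * S(u),   S(u) = sum_k 1 / ((2k + 1)^2 - u)^2,

   so both inequalities are statements about T(u) = (1 - u)^2 S(u).  For an odd square m >= 9
   the term ((1 - u) / (m - u))^2 lies strictly between (1 - 2u) / m^2 + 2u / m^3 and
   (1 - u) / m^2, while for m = 1 it equals 1.  Summing gives

     (1 - 2u) lambda(4) + 2u lambda(6) < T(u) < (1 - u) lambda(4) + u,

   with lambda(s) = sum_k (2k + 1)^(-s), and lambda(4) = pi^4/96, lambda(6) = pi^6/960 turn these
   into the two bounds.  For sharpness, the coefficient c(x) that makes the bound an equality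
   tends to the lower constant as x -> 0 and to the upper one as x -> pi/2. *)

section \<open>Reflection formulas for the digamma and trigamma functions\<close>

lemma Gamma_reflection_real:
  fixes x :: real
  shows "Gamma x * Gamma (1 - x) = pi / sin (pi * x)"
proof -
  have "complex_of_real (Gamma x * Gamma (1 - x)) = Gamma (of_real x) * Gamma (1 - of_real x)"
    by (simp only: of_real_mult of_real_diff of_real_1 flip: Gamma_complex_of_real)
  also have "\<dots> = of_real pi / sin (of_real pi * of_real x)"
    by (rule Gamma_reflection_complex)
  also have "\<dots> = of_real (pi / sin (pi * x))"
    by (simp flip: sin_of_real)
  finally show ?thesis
    by (simp only: of_real_eq_iff)
qed

lemma Digamma_reflection_real:
  fixes x :: real
  assumes "0 < x" "x < 1"
  shows "Digamma (1 - x) - Digamma x = pi * cot (pi * x)"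
proof -
  define \<phi> where "\<phi> y = ln_Gamma y + ln_Gamma (1 - y) + ln (sin (pi * y))" for y :: real
  have \<phi>_const: "ln pi = \<phi> y" if "y \<in> {0<..<1}" for y
  proof -
    have "sin (pi * y) > 0"
      using that by (intro sin_gt_zero) auto
    moreover have "Gamma y > 0" "Gamma (1 - y) > 0"
      using that by auto
    ultimately have "ln (Gamma y * Gamma (1 - y) * sin (pi * y)) = \<phi> y"
      using that by (simp add: \<phi>_def ln_Gamma_real_pos ln_mult del: Gamma_real_pos)
    then show ?thesis
      using \<open>sin (pi * y) > 0\<close> by (simp add: Gamma_reflection_real)
  qed
  have "sin (pi * x) > 0"
    using assms by (intro sin_gt_zero) auto
  have "(\<phi> has_field_derivative 0) (at x)"
    by (rule has_field_derivative_transform_within_open[OF DERIV_const _ _ \<phi>_const])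
       (use assms in auto)
  moreover have "(\<phi> has_field_derivative Digamma x - Digamma (1 - x) + pi * cot (pi * x)) (at x)"
    unfolding \<phi>_def cot_def using assms \<open>sin (pi * x) > 0\<close>
    by (auto intro!: derivative_eq_intros simp: field_simps)
  ultimately show ?thesis
    using DERIV_unique by fastforce
qed

lemma Polygamma_1_reflection_real:
  fixes x :: real
  assumes "0 < x" "x < 1"
  shows "Polygamma 1 x + Polygamma 1 (1 - x) = (pi / sin (pi * x))\<^sup>2"
proof -
  have not_nonpos_Int: "y \<notin> \<int>\<^sub>\<le>\<^sub>0" if "y > 0" for y :: real
    using that nonpos_Ints_nonpos by fastforce
  have "sin (pi * x) \<noteq> 0"
    using assms by (intro sin_gt_zero[THEN less_imp_neq, symmetric]) auto
  then have "((\<lambda>y. pi * cot (pi * y)) has_field_derivative - (pi / sin (pi * x))\<^sup>2) (at x)"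
    by (auto intro!: derivative_eq_intros DERIV_cot[THEN DERIV_chain2]
        simp: power_divide field_simps power2_eq_square)
  then have "((\<lambda>y. Digamma (1 - y) - Digamma y) has_field_derivative - (pi / sin (pi * x))\<^sup>2) (at x)"
    by (rule has_field_derivative_transform_within_open[of _ _ _ "{0<..<1}"])
       (use assms Digamma_reflection_real in auto)
  moreover have "((\<lambda>y. Digamma (1 - y) - Digamma y) has_field_derivative
      - Polygamma 1 (1 - x) - Polygamma 1 x) (at x)"
    using assms by (auto intro!: derivative_eq_intros not_nonpos_Int)
  ultimately show ?thesis
    using DERIV_unique by fastforce
qed

lemma Polygamma_1_sums:
  fixes z :: "'a :: {banach, real_normed_field}"
  assumes "z \<noteq> 0"
  shows "(\<lambda>k. inverse ((z + of_nat k)\<^sup>2)) sums Polygamma 1 z"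
  using Polygamma_LIMSEQ[OF assms, of 1] by (simp add: eval_nat_numeral)

lemma Digamma_reflection_sums:
  fixes z :: "'a :: {banach, real_normed_field}"
  assumes "z \<noteq> 0" "1 - z \<noteq> 0"
  shows "(\<lambda>k. inverse (z + of_nat k) - inverse (1 - z + of_nat k)) sums (Digamma (1 - z) - Digamma z)"
proof -
  have "(\<lambda>k. inverse (of_nat (Suc k)) - inverse (w + of_nat k)) sums (Digamma w + euler_mascheroni)"
    if "w \<noteq> 0" for w :: 'a
    using summable_Digamma[OF that] by (simp add: Digamma_def summable_sums)
  from sums_diff[OF this[OF assms(2)] this[OF assms(1)]] show ?thesis
    by simp
qed

section \<open>The partial fraction expansion\<close>

lemma reflection_partial_fraction_term:
  fixes A B t :: "'a :: field"
  assumes "A - B = 2 * t" "A \<noteq> 0" "B \<noteq> 0"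
  shows "t * (inverse (A\<^sup>2) + inverse (B\<^sup>2)) + (inverse A - inverse B) = 4 * t ^ 3 / (A * B)\<^sup>2"
proof -
  have "t * (inverse (A\<^sup>2) + inverse (B\<^sup>2)) + (inverse A - inverse B)
      = (t * (A\<^sup>2 + B\<^sup>2) - (A - B) * (A * B)) / (A * B)\<^sup>2"
    using assms(2,3) by (simp add: field_simps power2_eq_square)
  also have "t * (A\<^sup>2 + B\<^sup>2) - (A - B) * (A * B) = t * (A - B)\<^sup>2"
    using assms(1) by (simp add: eq_diff_eq power2_eq_square algebra_simps)
  finally show ?thesis
    unfolding assms(1) by (simp add: power2_eq_square power3_eq_cube)
qed

definition odd_square_series :: "real \<Rightarrow> real" where
  "odd_square_series u = (\<Sum>k. 1 / ((2 * real k + 1)\<^sup>2 - u)\<^sup>2)"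

lemma odd_square_series_tan:
  assumes "0 < t" "t < 1 / 2"
  shows "64 * t ^ 3 * odd_square_series (4 * t\<^sup>2) = t * (pi / cos (pi * t))\<^sup>2 - pi * tan (pi * t)"
proof -
  \<comment> \<open>The reflection formulas at \<open>y = 1/2 + t\<close> express the right-hand side as a series
    whose terms combine to \<open>64 t^3 / ((2k + 1)^2 - 4 t^2)^2\<close>.\<close>
  define y where "y = 1 / 2 + t"
  have y: "0 < y" "y < 1"
    using assms by (auto simp: y_def)
  have summand: "t * (inverse ((y + real k)\<^sup>2) + inverse ((1 - y + real k)\<^sup>2))
      + (inverse (y + real k) - inverse (1 - y + real k))
      = 64 * t ^ 3 * (1 / ((2 * real k + 1)\<^sup>2 - 4 * t\<^sup>2)\<^sup>2)" for k
  proof -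
    have AB: "(y + real k) * (1 - y + real k) = ((2 * real k + 1)\<^sup>2 - 4 * t\<^sup>2) / 4"
      by (simp add: y_def field_simps power2_eq_square)
    have "t * (inverse ((y + real k)\<^sup>2) + inverse ((1 - y + real k)\<^sup>2))
        + (inverse (y + real k) - inverse (1 - y + real k))
        = 4 * t ^ 3 / ((y + real k) * (1 - y + real k))\<^sup>2"
      using y by (intro reflection_partial_fraction_term) (auto simp: y_def)
    also have "\<dots> = 64 * t ^ 3 * (1 / ((2 * real k + 1)\<^sup>2 - 4 * t\<^sup>2)\<^sup>2)"
      unfolding AB by (simp add: power_divide)
    finally show ?thesis .
  qed
  have series: "(\<lambda>k. 64 * t ^ 3 * (1 / ((2 * real k + 1)\<^sup>2 - 4 * t\<^sup>2)\<^sup>2))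
      sums (t * (Polygamma 1 y + Polygamma 1 (1 - y)) + (Digamma (1 - y) - Digamma y))"
    unfolding summand[symmetric]
    using y by (intro sums_add sums_mult Polygamma_1_sums Digamma_reflection_sums) auto
  have "pi * y = pi / 2 + pi * t"
    by (simp add: y_def distrib_left)
  then have series_value: "t * (Polygamma 1 y + Polygamma 1 (1 - y)) + (Digamma (1 - y) - Digamma y)
      = t * (pi / cos (pi * t))\<^sup>2 - pi * tan (pi * t)"
    unfolding Polygamma_1_reflection_real[OF y] Digamma_reflection_real[OF y] cot_def
    by (simp add: sin_add cos_add tan_def)
  from sums_divide[OF series[unfolded series_value], of "64 * t ^ 3"]
  have "(\<lambda>k. 1 / ((2 * real k + 1)\<^sup>2 - 4 * t\<^sup>2)\<^sup>2)
      sums ((t * (pi / cos (pi * t))\<^sup>2 - pi * tan (pi * t)) / (64 * t ^ 3))"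
    using assms by simp
  then show ?thesis
    using assms unfolding odd_square_series_def by (simp add: sums_iff)
qed

lemma f20_eq_odd_square_series:
  assumes "0 < x" "x < pi / 2"
  shows "f20 x = 64 * x ^ 3 / pi ^ 4 * odd_square_series (4 * x\<^sup>2 / pi\<^sup>2)"
proof -
  have "64 * (x / pi) ^ 3 * odd_square_series (4 * (x / pi)\<^sup>2) = pi * f20 x"
    using assms by (subst odd_square_series_tan) (auto simp: field_simps f20_def power2_eq_square)
  then show ?thesis
    by (simp add: field_simps power_divide eval_nat_numeral)
qed

section \<open>Termwise estimates\<close>

lemma sums_less:
  fixes f g :: "nat \<Rightarrow> real"
  assumes "\<And>n. f n \<le> g n" "f i < g i" "f sums s" "g sums t"
  shows "s < t"
proof -
  have "(\<lambda>n. g n - f n) sums (t - s)"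
    by (rule sums_diff[OF assms(4,3)])
  moreover have "0 < (\<Sum>n. g n - f n)"
    by (rule suminf_pos2[OF sums_summable[OF calculation], of i]) (use assms(1,2) in auto)
  ultimately show ?thesis
    by (simp add: sums_iff)
qed

definition dirichlet_lambda :: "nat \<Rightarrow> real" where
  "dirichlet_lambda s = (\<Sum>k. 1 / (2 * real k + 1) ^ s)"

lemma dirichlet_lambda_sums:
  assumes "2 \<le> s"
  shows "(\<lambda>k. 1 / (2 * real k + 1) ^ s) sums dirichlet_lambda s"
proof -
  have "summable (\<lambda>k. 1 / real (Suc k) ^ s)"
    using inverse_power_summable[OF assms, where 'a = real]
    by (subst summable_Suc_iff) (simp add: inverse_eq_divide)
  then have "summable (\<lambda>k. 1 / (2 * real k + 1) ^ s)"
  proof (rule summable_comparison_test'[where N = 0])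
    fix k :: nat
    have "real (Suc k) ^ s \<le> (2 * real k + 1) ^ s"
      by (rule power_mono) auto
    then have "1 / (2 * real k + 1) ^ s \<le> 1 / real (Suc k) ^ s"
      by (rule divide_left_mono) auto
    then show "norm (1 / (2 * real k + 1) ^ s) \<le> 1 / real (Suc k) ^ s"
      by simp
  qed
  then show ?thesis
    by (simp add: dirichlet_lambda_def summable_sums)
qed

lemma dirichlet_lambda_4_6_sums:
  "(\<lambda>k. 1 / ((2 * real k + 1)\<^sup>2)\<^sup>2) sums dirichlet_lambda 4"
  "(\<lambda>k. 1 / ((2 * real k + 1)\<^sup>2) ^ 3) sums dirichlet_lambda 6"
  using dirichlet_lambda_sums[of 4] dirichlet_lambda_sums[of 6] by (simp_all flip: power_mult)

lemma inverse_shifted_square_bounds: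
  fixes m u :: real
  assumes "1 \<le> m" "0 \<le> u" "u \<le> 1 / 2"
  shows "1 / m\<^sup>2 + 2 * u / m ^ 3 \<le> 1 / (m - u)\<^sup>2"
    and "1 / (m - u)\<^sup>2 \<le> 1 / m\<^sup>2 + 2 * u / m ^ 3 + 12 * u\<^sup>2 / m\<^sup>2"
proof -
  have "m / 2 \<le> m - u" "m \<noteq> 0" "m - u \<noteq> 0"
    using assms by simp_all
  have diff: "1 / (m - u)\<^sup>2 - (1 / m\<^sup>2 + 2 * u / m ^ 3) = u\<^sup>2 * (3 * m - 2 * u) / (m ^ 3 * (m - u)\<^sup>2)"
    using \<open>m \<noteq> 0\<close> \<open>m - u \<noteq> 0\<close> by (simp add: divide_simps) (simp add: algebra_simps eval_nat_numeral)
  have "0 \<le> u\<^sup>2 * (3 * m - 2 * u) / (m ^ 3 * (m - u)\<^sup>2)"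
    using assms by simp
  then show "1 / m\<^sup>2 + 2 * u / m ^ 3 \<le> 1 / (m - u)\<^sup>2"
    using diff by linarith
  have "u\<^sup>2 * (3 * m - 2 * u) / (m ^ 3 * (m - u)\<^sup>2) \<le> u\<^sup>2 * (3 * m) / (m ^ 3 * (m / 2)\<^sup>2)"
    using assms \<open>m / 2 \<le> m - u\<close> by (intro frac_le mult_left_mono power_mono) auto
  also have "\<dots> = 12 * u\<^sup>2 / m ^ 4"
    using assms by (simp add: field_simps eval_nat_numeral)
  also have "\<dots> \<le> 12 * u\<^sup>2 / m\<^sup>2"
    using assms by (intro divide_left_mono) (auto simp: power_increasing)
  finally show "1 / (m - u)\<^sup>2 \<le> 1 / m\<^sup>2 + 2 * u / m ^ 3 + 12 * u\<^sup>2 / m\<^sup>2"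
    using diff by simp
qed

lemma shifted_ratio_square_gt:
  fixes m u :: real
  assumes "3 \<le> m" "0 < u" "u < 1"
  shows "(1 - 2 * u) / m\<^sup>2 + 2 * u / m ^ 3 < ((1 - u) / (m - u))\<^sup>2"
proof -
  have "m \<noteq> 0" "m - u \<noteq> 0"
    using assms by simp_all
  then have "((1 - u) / (m - u))\<^sup>2 - ((1 - 2 * u) / m\<^sup>2 + 2 * u / m ^ 3)
      = u\<^sup>2 * (m * (m - 1) * (m - 3) + 2 * (m - 1) * u) / (m ^ 3 * (m - u)\<^sup>2)"
    by (simp add: divide_simps) (simp add: algebra_simps eval_nat_numeral)
  moreover have "0 < m * (m - 1) * (m - 3) + 2 * (m - 1) * u"
    using assms by (intro add_nonneg_pos) auto
  then have "0 < u\<^sup>2 * (m * (m - 1) * (m - 3) + 2 * (m - 1) * u) / (m ^ 3 * (m - u)\<^sup>2)"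
    using assms by (intro divide_pos_pos mult_pos_pos) auto
  ultimately show ?thesis
    by linarith
qed

lemma shifted_ratio_square_lt:
  fixes m u :: real
  assumes "2 \<le> m" "0 < u" "u < 1"
  shows "((1 - u) / (m - u))\<^sup>2 < (1 - u) / m\<^sup>2"
proof -
  have "m \<noteq> 0" "m - u \<noteq> 0"
    using assms by simp_all
  then have "(1 - u) / m\<^sup>2 - ((1 - u) / (m - u))\<^sup>2 = (1 - u) * u * (m * (m - 2) + u) / (m\<^sup>2 * (m - u)\<^sup>2)"
    by (simp add: divide_simps) (simp add: algebra_simps eval_nat_numeral)
  moreover have "0 < m * (m - 2) + u"
    using assms by (intro add_nonneg_pos) auto
  then have "0 < (1 - u) * u * (m * (m - 2) + u) / (m\<^sup>2 * (m - u)\<^sup>2)"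
    using assms by (intro divide_pos_pos mult_pos_pos) auto
  ultimately show ?thesis
    by linarith
qed

lemma odd_square_series_sums:
  assumes "0 \<le> u" "u < 1"
  shows "(\<lambda>k. 1 / ((2 * real k + 1)\<^sup>2 - u)\<^sup>2) sums odd_square_series u"
proof -
  have "summable (\<lambda>k. 1 / (1 - u)\<^sup>2 * (1 / (2 * real k + 1) ^ 4))"
    using sums_summable[OF dirichlet_lambda_sums[of 4]] by (intro summable_mult) simp
  then have "summable (\<lambda>k. 1 / ((2 * real k + 1)\<^sup>2 - u)\<^sup>2)"
  proof (rule summable_comparison_test'[where N = 0])
    fix k :: nat
    define m where "m = (2 * real k + 1)\<^sup>2"
    have "1 \<le> m"
      unfolding m_def by (rule one_le_power) simp
    then have "u * 1 \<le> u * m"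
      using assms(1) by (rule mult_left_mono)
    then have "(1 - u) * m \<le> m - u"
      by (simp add: algebra_simps)
    moreover have "0 < (1 - u) * m"
      using assms \<open>1 \<le> m\<close> by simp
    ultimately have "1 / (m - u)\<^sup>2 \<le> 1 / ((1 - u) * m)\<^sup>2"
      using assms \<open>1 \<le> m\<close> by (intro divide_left_mono power_mono mult_pos_pos zero_less_power) simp_all
    also have "\<dots> = 1 / (1 - u)\<^sup>2 * (1 / (2 * real k + 1) ^ 4)"
      by (simp add: m_def power_mult_distrib flip: power_mult)
    finally show "norm (1 / ((2 * real k + 1)\<^sup>2 - u)\<^sup>2) \<le> 1 / (1 - u)\<^sup>2 * (1 / (2 * real k + 1) ^ 4)"
      by (simp add: m_def)
  qed
  then show ?thesis
    by (simp add: odd_square_series_def summable_sums)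
qed

lemma odd_square_series_bounds:
  assumes "0 \<le> u" "u \<le> 1 / 2"
  shows "dirichlet_lambda 4 + 2 * u * dirichlet_lambda 6 \<le> odd_square_series u"
    and "odd_square_series u \<le> dirichlet_lambda 4 + 2 * u * dirichlet_lambda 6 + 12 * u\<^sup>2 * dirichlet_lambda 4"
proof -
  let ?m = "\<lambda>k. (2 * real k + 1)\<^sup>2"
  have m1: "1 \<le> ?m k" for k
    by (rule one_le_power) simp
  have S: "(\<lambda>k. 1 / (?m k - u)\<^sup>2) sums odd_square_series u"
    using assms by (intro odd_square_series_sums) simp_all
  have L: "(\<lambda>k. 1 / (?m k)\<^sup>2 + 2 * u / ?m k ^ 3) sums (dirichlet_lambda 4 + 2 * u * dirichlet_lambda 6)"
    using sums_add[OF dirichlet_lambda_4_6_sums(1) sums_mult[OF dirichlet_lambda_4_6_sums(2), of "2 * u"]]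
    by simp
  show "dirichlet_lambda 4 + 2 * u * dirichlet_lambda 6 \<le> odd_square_series u"
    using inverse_shifted_square_bounds(1)[OF m1 assms] L S by (rule sums_le)
  have "(\<lambda>k. 1 / (?m k)\<^sup>2 + 2 * u / ?m k ^ 3 + 12 * u\<^sup>2 / (?m k)\<^sup>2)
      sums (dirichlet_lambda 4 + 2 * u * dirichlet_lambda 6 + 12 * u\<^sup>2 * dirichlet_lambda 4)"
    using sums_add[OF L sums_mult[OF dirichlet_lambda_4_6_sums(1), of "12 * u\<^sup>2"]] by simp
  with inverse_shifted_square_bounds(2)[OF m1 assms] S
  show "odd_square_series u \<le> dirichlet_lambda 4 + 2 * u * dirichlet_lambda 6 + 12 * u\<^sup>2 * dirichlet_lambda 4"
    by (rule sums_le)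
qed

lemma shifted_odd_square_series_sums:
  assumes "0 \<le> u" "u < 1"
  shows "(\<lambda>k. ((1 - u) / ((2 * real k + 1)\<^sup>2 - u))\<^sup>2) sums ((1 - u)\<^sup>2 * odd_square_series u)"
  using sums_mult[OF odd_square_series_sums[OF assms], of "(1 - u)\<^sup>2"] by (simp add: power_divide)

lemma odd_square_ge_nine: "k \<noteq> 0 \<Longrightarrow> 9 \<le> (2 * real k + 1)\<^sup>2"
  using power_mono[of 3 "2 * real k + 1" 2] by simp

lemma odd_square_series_lower:
  assumes "0 < u" "u < 1"
  shows "(1 - 2 * u) * dirichlet_lambda 4 + 2 * u * dirichlet_lambda 6 < (1 - u)\<^sup>2 * odd_square_series u"
proof (rule sums_less)
  let ?m = "\<lambda>k. (2 * real k + 1)\<^sup>2"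
  have gt: "(1 - 2 * u) / (?m k)\<^sup>2 + 2 * u / ?m k ^ 3 < ((1 - u) / (?m k - u))\<^sup>2" if "k \<noteq> 0" for k
    using odd_square_ge_nine[OF that] assms by (intro shifted_ratio_square_gt) simp_all
  show "(1 - 2 * u) / (?m k)\<^sup>2 + 2 * u / ?m k ^ 3 \<le> ((1 - u) / (?m k - u))\<^sup>2" for k
  proof (cases "k = 0")
    case True
    with assms show ?thesis
      by simp
  qed (use gt in \<open>simp add: less_imp_le\<close>)
  show "(1 - 2 * u) / (?m 1)\<^sup>2 + 2 * u / ?m 1 ^ 3 < ((1 - u) / (?m 1 - u))\<^sup>2"
    by (rule gt) simp
  show "(\<lambda>k. (1 - 2 * u) / (?m k)\<^sup>2 + 2 * u / ?m k ^ 3)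
      sums ((1 - 2 * u) * dirichlet_lambda 4 + 2 * u * dirichlet_lambda 6)"
    using sums_add[OF sums_mult[OF dirichlet_lambda_4_6_sums(1)] sums_mult[OF dirichlet_lambda_4_6_sums(2)]]
    by simp
  show "(\<lambda>k. ((1 - u) / (?m k - u))\<^sup>2) sums ((1 - u)\<^sup>2 * odd_square_series u)"
    using assms by (intro shifted_odd_square_series_sums) simp_all
qed

lemma odd_square_series_upper:
  assumes "0 < u" "u < 1"
  shows "(1 - u)\<^sup>2 * odd_square_series u < (1 - u) * dirichlet_lambda 4 + u"
proof (rule sums_less)
  let ?m = "\<lambda>k. (2 * real k + 1)\<^sup>2"
  have lt: "((1 - u) / (?m k - u))\<^sup>2 < (1 - u) / (?m k)\<^sup>2" if "k \<noteq> 0" for k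
    using odd_square_ge_nine[OF that] assms by (intro shifted_ratio_square_lt) simp_all
  \<comment> \<open>The term for \<open>k = 0\<close> is \<open>1 = (1 - u) + u\<close>.\<close>
  show "((1 - u) / (?m k - u))\<^sup>2 \<le> (1 - u) / (?m k)\<^sup>2 + (if k = 0 then u else 0)" for k
  proof (cases "k = 0")
    case True
    with assms show ?thesis
      by (simp add: power_divide)
  qed (use lt in \<open>simp add: less_imp_le\<close>)
  show "((1 - u) / (?m 1 - u))\<^sup>2 < (1 - u) / (?m 1)\<^sup>2 + (if (1::nat) = 0 then u else 0)"
    using lt[of 1] by simp
  show "(\<lambda>k. (1 - u) / (?m k)\<^sup>2 + (if k = 0 then u else 0)) sums ((1 - u) * dirichlet_lambda 4 + u)"
    using sums_add[OF sums_mult[OF dirichlet_lambda_4_6_sums(1)] sums_single[of 0 "\<lambda>_. u"]]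
    by simp
  show "(\<lambda>k. ((1 - u) / (?m k - u))\<^sup>2) sums ((1 - u)\<^sup>2 * odd_square_series u)"
    using assms by (intro shifted_odd_square_series_sums) simp_all
qed

section \<open>The values of lambda(4) and lambda(6)\<close>

lemma tendsto_odd_square_series_slope:
  "((\<lambda>u. (odd_square_series u - dirichlet_lambda 4) / u) \<longlongrightarrow> 2 * dirichlet_lambda 6) (at_right 0)"
proof (rule tendsto_sandwich)
  have near_0: "eventually (\<lambda>u. u \<in> {0<..<1 / 2}) (at_right (0::real))"
    by (rule eventually_at_right_real) simp
  have bounds: "2 * dirichlet_lambda 6 \<le> (odd_square_series u - dirichlet_lambda 4) / u"
      "(odd_square_series u - dirichlet_lambda 4) / u \<le> 2 * dirichlet_lambda 6 + 12 * u * dirichlet_lambda 4"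
    if "u \<in> {0<..<1 / 2}" for u
    using odd_square_series_bounds[of u] that by (auto simp: field_simps power2_eq_square)
  show "eventually (\<lambda>u. 2 * dirichlet_lambda 6 \<le> (odd_square_series u - dirichlet_lambda 4) / u) (at_right 0)"
    using near_0 by eventually_elim (rule bounds(1))
  show "eventually (\<lambda>u. (odd_square_series u - dirichlet_lambda 4) / u
      \<le> 2 * dirichlet_lambda 6 + 12 * u * dirichlet_lambda 4) (at_right 0)"
    using near_0 by eventually_elim (rule bounds(2))
  have "((\<lambda>u. 2 * dirichlet_lambda 6 + 12 * u * dirichlet_lambda 4) \<longlongrightarrow>
      2 * dirichlet_lambda 6 + 12 * 0 * dirichlet_lambda 4) (at_right 0)"
    by (intro tendsto_intros)
  then show "((\<lambda>u. 2 * dirichlet_lambda 6 + 12 * u * dirichlet_lambda 4) \<longlongrightarrow> 2 * dirichlet_lambda 6)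
      (at_right 0)"
    by simp
qed simp

lemma tendsto_odd_square_series: "(odd_square_series \<longlongrightarrow> dirichlet_lambda 4) (at_right 0)"
proof -
  have "((\<lambda>u. dirichlet_lambda 4 + u * ((odd_square_series u - dirichlet_lambda 4) / u))
      \<longlongrightarrow> dirichlet_lambda 4 + 0 * (2 * dirichlet_lambda 6)) (at_right 0)"
    by (intro tendsto_intros tendsto_odd_square_series_slope)
  moreover have "eventually (\<lambda>u. dirichlet_lambda 4 + u * ((odd_square_series u - dirichlet_lambda 4) / u)
      = odd_square_series u) (at_right 0)"
    using eventually_at_right_less[of 0] by eventually_elim simp
  ultimately show ?thesis
    by (simp add: tendsto_cong)
qed

lemma eventually_f20_div_cube:
  "eventually (\<lambda>x. f20 x / x ^ 3 = 64 / pi ^ 4 * odd_square_series (4 * x\<^sup>2 / pi\<^sup>2)) (at_right 0)"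
proof -
  have "eventually (\<lambda>x. x \<in> {0<..<pi / 2}) (at_right (0::real))"
    by (rule eventually_at_right_real) simp
  then show ?thesis
    by eventually_elim (simp add: f20_eq_odd_square_series)
qed

lemma filterlim_scaled_square_at_right_0: "filterlim (\<lambda>x::real. 4 * x\<^sup>2 / pi\<^sup>2) (at_right 0) (at_right 0)"
  by real_asymp

text \<open>Rather than summing the series, \<open>\<lambda>(4)\<close> and \<open>\<lambda>(6)\<close> are read off by comparing the
  expansion \<open>odd_square_series u = \<lambda>(4) + 2 \<lambda>(6) u + O(u^2)\<close> with the Taylor expansion of
  \<open>f20\<close> at 0.\<close>

lemma dirichlet_lambda_4: "dirichlet_lambda 4 = pi ^ 4 / 96"
proof -
  have "((\<lambda>x. 64 / pi ^ 4 * odd_square_series (4 * x\<^sup>2 / pi\<^sup>2)) \<longlongrightarrow> 64 / pi ^ 4 * dirichlet_lambda 4)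
      (at_right 0)"
    by (intro tendsto_mult_left filterlim_compose[OF tendsto_odd_square_series
          filterlim_scaled_square_at_right_0])
  then have "((\<lambda>x. f20 x / x ^ 3) \<longlongrightarrow> 64 / pi ^ 4 * dirichlet_lambda 4) (at_right 0)"
    using eventually_f20_div_cube by (simp add: tendsto_cong)
  moreover have "((\<lambda>x. f20 x / x ^ 3) \<longlongrightarrow> 2 / 3) (at_right 0)"
    unfolding f20_def by real_asymp
  ultimately have "64 / pi ^ 4 * dirichlet_lambda 4 = 2 / 3"
    by (rule tendsto_unique[rotated]) simp
  then show ?thesis
    by (simp add: field_simps)
qed

lemma dirichlet_lambda_6: "dirichlet_lambda 6 = pi ^ 6 / 960"
proof -
  let ?u = "\<lambda>x. 4 * x\<^sup>2 / pi\<^sup>2"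
  have "((\<lambda>x. 256 / pi ^ 6 * ((odd_square_series (?u x) - dirichlet_lambda 4) / ?u x))
      \<longlongrightarrow> 256 / pi ^ 6 * (2 * dirichlet_lambda 6)) (at_right 0)"
    by (intro tendsto_mult_left filterlim_compose[OF tendsto_odd_square_series_slope
          filterlim_scaled_square_at_right_0])
  moreover have "eventually (\<lambda>x. 256 / pi ^ 6 * ((odd_square_series (?u x) - dirichlet_lambda 4) / ?u x)
      = (f20 x / x ^ 3 - 2 / 3) / x\<^sup>2) (at_right 0)"
    using eventually_f20_div_cube eventually_at_right_less[of 0]
  proof eventually_elim
    case (elim x)
    then show ?case
      by (simp only: elim(1) dirichlet_lambda_4) (simp add: field_simps eval_nat_numeral)
  qed
  ultimately have "((\<lambda>x. (f20 x / x ^ 3 - 2 / 3) / x\<^sup>2) \<longlongrightarrow> 512 / pi ^ 6 * dirichlet_lambda 6) (at_right 0)"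
    by (simp add: tendsto_cong)
  moreover have "((\<lambda>x. (f20 x / x ^ 3 - 2 / 3) / x\<^sup>2) \<longlongrightarrow> 8 / 15) (at_right 0)"
    unfolding f20_def by real_asymp
  ultimately have "512 / pi ^ 6 * dirichlet_lambda 6 = 8 / 15"
    by (rule tendsto_unique[rotated]) simp
  then show ?thesis
    by (simp add: field_simps)
qed

section \<open>The sharp constants\<close>

definition exact_coeff20 :: "real \<Rightarrow> real" where
  "exact_coeff20 x = (f20 x * (pi\<^sup>2 - 4 * x\<^sup>2)\<^sup>2 - 2 * pi ^ 4 / 3 * x ^ 3) / x ^ 5"

lemma four_square_less_pi_square:
  fixes x :: real
  assumes "0 < x" "x < pi / 2"
  shows "4 * x\<^sup>2 < pi\<^sup>2"
proof -
  have "x\<^sup>2 < (pi / 2)\<^sup>2"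
    using assms by (intro power_strict_mono) auto
  then show ?thesis
    by (simp add: power_divide)
qed

lemma bound20_exact_coeff20:
  assumes "0 < x" "x < pi / 2"
  shows "bound20 (exact_coeff20 x) x = f20 x"
proof -
  have "pi\<^sup>2 - 4 * x\<^sup>2 \<noteq> 0"
    using four_square_less_pi_square[OF assms] by simp
  then show ?thesis
    using assms by (simp add: bound20_def exact_coeff20_def field_simps)
qed

lemma bound20_less_bound20_iff:
  assumes "0 < x" "x < pi / 2"
  shows "bound20 c x < bound20 d x \<longleftrightarrow> c < d"
proof -
  have "0 < (pi\<^sup>2 - 4 * x\<^sup>2)\<^sup>2"
    using four_square_less_pi_square[OF assms] by simp
  with assms show ?thesis
    by (simp add: bound20_def divide_less_cancel)
qed

lemma exact_coeff20_odd_square_series: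
  assumes "0 < x" "x < pi / 2"
  shows "exact_coeff20 x
    = 64 * ((1 - 4 * x\<^sup>2 / pi\<^sup>2)\<^sup>2 * odd_square_series (4 * x\<^sup>2 / pi\<^sup>2) - dirichlet_lambda 4) / x\<^sup>2"
proof -
  define u where "u = 4 * x\<^sup>2 / pi\<^sup>2"
  have "pi\<^sup>2 - 4 * x\<^sup>2 = pi\<^sup>2 * (1 - u)"
    by (simp add: u_def field_simps)
  then have "(pi\<^sup>2 - 4 * x\<^sup>2)\<^sup>2 = pi ^ 4 * (1 - u)\<^sup>2"
    by (simp add: power_mult_distrib flip: power_mult)
  moreover have "f20 x = 64 * x ^ 3 / pi ^ 4 * odd_square_series u"
    unfolding u_def by (rule f20_eq_odd_square_series[OF assms])
  ultimately have "f20 x * (pi\<^sup>2 - 4 * x\<^sup>2)\<^sup>2 = 64 * x ^ 3 * ((1 - u)\<^sup>2 * odd_square_series u)"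
    by simp
  then have "exact_coeff20 x = (64 * x ^ 3 * ((1 - u)\<^sup>2 * odd_square_series u) - 2 * pi ^ 4 / 3 * x ^ 3) / x ^ 5"
    by (simp only: exact_coeff20_def)
  also have "\<dots> = 64 * ((1 - u)\<^sup>2 * odd_square_series u - pi ^ 4 / 96) / x\<^sup>2"
    using assms by (simp add: field_simps eval_nat_numeral)
  finally show ?thesis
    by (simp only: u_def dirichlet_lambda_4)
qed

lemma exact_coeff20_bounds:
  assumes "0 < x" "x < pi / 2"
  shows "8 * pi ^ 4 / 15 - 16 * pi\<^sup>2 / 3 < exact_coeff20 x"
    and "exact_coeff20 x < 256 / pi\<^sup>2 - 8 * pi\<^sup>2 / 3"
proof -
  define u where "u = 4 * x\<^sup>2 / pi\<^sup>2"
  define T where "T = (1 - u)\<^sup>2 * odd_square_series u"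
  have u: "0 < u" "u < 1"
    using assms four_square_less_pi_square[OF assms] by (simp_all add: u_def)
  have "x \<noteq> 0"
    using assms by simp
  have coeff: "exact_coeff20 x = 64 * (T - dirichlet_lambda 4) / x\<^sup>2"
    using exact_coeff20_odd_square_series[OF assms] by (simp add: T_def u_def)
  have "64 * (2 * u * (dirichlet_lambda 6 - dirichlet_lambda 4)) / x\<^sup>2 < 64 * (T - dirichlet_lambda 4) / x\<^sup>2"
    using odd_square_series_lower[OF u] assms by (simp add: T_def divide_strict_right_mono algebra_simps)
  moreover have "64 * (2 * u * (dirichlet_lambda 6 - dirichlet_lambda 4)) / x\<^sup>2 = 8 * pi ^ 4 / 15 - 16 * pi\<^sup>2 / 3"
    unfolding u_def dirichlet_lambda_4 dirichlet_lambda_6 using \<open>x \<noteq> 0\<close> by (simp add: field_simps)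
  ultimately show "8 * pi ^ 4 / 15 - 16 * pi\<^sup>2 / 3 < exact_coeff20 x"
    by (simp add: coeff)
  have "64 * (T - dirichlet_lambda 4) / x\<^sup>2 < 64 * (u * (1 - dirichlet_lambda 4)) / x\<^sup>2"
    using odd_square_series_upper[OF u] assms by (simp add: T_def divide_strict_right_mono algebra_simps)
  moreover have "64 * (u * (1 - dirichlet_lambda 4)) / x\<^sup>2 = 256 / pi\<^sup>2 - 8 * pi\<^sup>2 / 3"
    unfolding u_def dirichlet_lambda_4 using \<open>x \<noteq> 0\<close> by (simp add: field_simps)
  ultimately show "exact_coeff20 x < 256 / pi\<^sup>2 - 8 * pi\<^sup>2 / 3"
    by (simp add: coeff)
qed

lemma tendsto_exact_coeff20_at_right_0:
  "(exact_coeff20 \<longlongrightarrow> 8 * pi ^ 4 / 15 - 16 * pi\<^sup>2 / 3) (at_right 0)"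
  unfolding exact_coeff20_def f20_def by (real_asymp simp: field_simps)

lemma tendsto_exact_coeff20_at_left_pi_half:
  "(exact_coeff20 \<longlongrightarrow> 256 / pi\<^sup>2 - 8 * pi\<^sup>2 / 3) (at_left (pi / 2))"
proof -
  have "exact_coeff20 (pi / 2 - t) =
      (((pi / 2 - t) / (sin t)\<^sup>2 - cos t / sin t) * (pi\<^sup>2 - 4 * (pi / 2 - t)\<^sup>2)\<^sup>2
        - 2 * pi ^ 4 / 3 * (pi / 2 - t) ^ 3) / (pi / 2 - t) ^ 5" for t
    by (simp add: exact_coeff20_def f20_def tan_def cos_diff sin_diff)
  moreover have "((\<lambda>t. (((pi / 2 - t) / (sin t)\<^sup>2 - cos t / sin t) * (pi\<^sup>2 - 4 * (pi / 2 - t)\<^sup>2)\<^sup>2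
        - 2 * pi ^ 4 / 3 * (pi / 2 - t) ^ 3) / (pi / 2 - t) ^ 5)
      \<longlongrightarrow> 256 / pi\<^sup>2 - 8 * pi\<^sup>2 / 3) (at_right 0)"
    by (real_asymp simp: field_simps) (simp add: field_simps eval_nat_numeral)
  ultimately have "((\<lambda>t. exact_coeff20 (pi / 2 - t)) \<longlongrightarrow> 256 / pi\<^sup>2 - 8 * pi\<^sup>2 / 3) (at_right 0)"
    by simp
  then show ?thesis
    by (simp add: filterlim_at_left_to_right filterlim_at_right_to_0[of _ _ "- (pi / 2)"])
qed

lemma exists_exact_coeff20_less:
  assumes "8 * pi ^ 4 / 15 - 16 * pi\<^sup>2 / 3 < a"
  shows "\<exists>x. 0 < x \<and> x < pi / 2 \<and> exact_coeff20 x < a"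
proof -
  have "eventually (\<lambda>x. exact_coeff20 x < a \<and> x \<in> {0<..<pi / 2}) (at_right 0)"
    using order_tendstoD(2)[OF tendsto_exact_coeff20_at_right_0 assms]
      eventually_at_right_real[of 0 "pi / 2"] by (intro eventually_conj) auto
  then show ?thesis
    using eventually_happens'[OF trivial_limit_at_right_real] by auto
qed

lemma exists_exact_coeff20_greater:
  assumes "b < 256 / pi\<^sup>2 - 8 * pi\<^sup>2 / 3"
  shows "\<exists>x. 0 < x \<and> x < pi / 2 \<and> b < exact_coeff20 x"
proof -
  have "eventually (\<lambda>x. b < exact_coeff20 x \<and> x \<in> {0<..<pi / 2}) (at_left (pi / 2))"
    using order_tendstoD(1)[OF tendsto_exact_coeff20_at_left_pi_half assms]
      eventually_at_left_real[of 0 "pi / 2"] by (intro eventually_conj) auto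
  then show ?thesis
    using eventually_happens'[OF trivial_limit_at_left_real] by auto
qed

theorem mainTheorem20:
  shows "(\<forall>x::real. 0 < x \<and> x < pi / 2 \<longrightarrow>
            bound20 (8 * pi^4 / 15 - 16 * pi\<^sup>2 / 3) x < f20 x \<and>
            f20 x < bound20 (256 / pi\<^sup>2 - 8 * pi\<^sup>2 / 3) x)
       \<and> (\<forall>a::real. a > 8 * pi^4 / 15 - 16 * pi\<^sup>2 / 3 \<longrightarrow>
            (\<exists>x. 0 < x \<and> x < pi / 2 \<and> \<not> (bound20 a x < f20 x)))
       \<and> (\<forall>b::real. b < 256 / pi\<^sup>2 - 8 * pi\<^sup>2 / 3 \<longrightarrow>
            (\<exists>x. 0 < x \<and> x < pi / 2 \<and> \<not> (f20 x < bound20 b x)))"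
proof (intro conjI allI impI)
  fix x :: real
  assume "0 < x \<and> x < pi / 2"
  then show "bound20 (8 * pi^4 / 15 - 16 * pi\<^sup>2 / 3) x < f20 x"
    and "f20 x < bound20 (256 / pi\<^sup>2 - 8 * pi\<^sup>2 / 3) x"
    using exact_coeff20_bounds[of x] bound20_less_bound20_iff[of x]
    by (simp_all flip: bound20_exact_coeff20[of x])
next
  fix a :: real
  assume "a > 8 * pi^4 / 15 - 16 * pi\<^sup>2 / 3"
  then obtain x where "0 < x" "x < pi / 2" "exact_coeff20 x < a"
    using exists_exact_coeff20_less by blast
  then show "\<exists>x. 0 < x \<and> x < pi / 2 \<and> \<not> (bound20 a x < f20 x)"
    using bound20_less_bound20_iff[of x] bound20_exact_coeff20[of x] by (metis less_asym)
next
  fix b :: real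
  assume "b < 256 / pi\<^sup>2 - 8 * pi\<^sup>2 / 3"
  then obtain x where "0 < x" "x < pi / 2" "b < exact_coeff20 x"
    using exists_exact_coeff20_greater by blast
  then show "\<exists>x. 0 < x \<and> x < pi / 2 \<and> \<not> (f20 x < bound20 b x)"
    using bound20_less_bound20_iff[of x] bound20_exact_coeff20[of x] by (metis less_asym)
qed

end
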